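(* Let $S_n=(E_{n-m},K_m)$ be a split graph on $n$ vertices such that each vertex $v$ of $K_m$ has degree at most $m$ in $S_n$ (i.e. the degree of $v$ is $m-1$ or $m$). Then $S_n$ is word-representable.
   Context: A graph $G=(V,E)$ is word-representable if there exists a word $w$ over the alphabet $V$ such that for all distinct $x,y\in V$, the letters $x$ and $y$ alternate in $w$ if and only if $xy\in E$ (alternation meaning that deleting all letters other than $x$ and $y$ leaves $xyxy\cdots$ or $yxyx\cdots$). The notation $S_n=(E_{n-m},K_m)$ denotes a split graph on $n$ vertices whose vertex set is partitioned into a maximal clique $K_m$ on $m$ vertices and an independent set $E_{n-m}$ on $n-m$ vertices (so each vertex of $E_{n-m}$ has degree at most $m-1$). *)

theory Defs
  imports Main
begin

definition simple_graph :: "'a set \<Rightarrow> ('a \<Rightarrow> 'a \<Rightarrow> bool) \<Rightarrow> bool" where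
  "simple_graph V E \<longleftrightarrow> finite V \<and>
     (\<forall>x y. E x y \<longrightarrow> x \<in> V \<and> y \<in> V \<and> x \<noteq> y) \<and>
     (\<forall>x y. E x y \<longrightarrow> E y x)"

definition degree :: "'a set \<Rightarrow> ('a \<Rightarrow> 'a \<Rightarrow> bool) \<Rightarrow> 'a \<Rightarrow> nat" where
  "degree V E v = card {u \<in> V. E v u}"

definition is_clique :: "'a set \<Rightarrow> ('a \<Rightarrow> 'a \<Rightarrow> bool) \<Rightarrow> 'a set \<Rightarrow> bool" where
  "is_clique V E K \<longleftrightarrow> K \<subseteq> V \<and> (\<forall>x\<in>K. \<forall>y\<in>K. x \<noteq> y \<longrightarrow> E x y)"

definition is_maximal_clique :: "'a set \<Rightarrow> ('a \<Rightarrow> 'a \<Rightarrow> bool) \<Rightarrow> 'a set \<Rightarrow> bool" where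
  "is_maximal_clique V E K \<longleftrightarrow> is_clique V E K \<and>
     (\<forall>v \<in> V - K. \<not> (\<forall>x\<in>K. E v x))"

definition is_independent :: "'a set \<Rightarrow> ('a \<Rightarrow> 'a \<Rightarrow> bool) \<Rightarrow> 'a set \<Rightarrow> bool" where
  "is_independent V E I \<longleftrightarrow> I \<subseteq> V \<and> (\<forall>x\<in>I. \<forall>y\<in>I. \<not> E x y)"

definition alternate :: "'a list \<Rightarrow> 'a \<Rightarrow> 'a \<Rightarrow> bool" where
  "alternate w x y \<longleftrightarrow>
     (let u = filter (\<lambda>z. z = x \<or> z = y) w in
      \<forall>i. Suc i < length u \<longrightarrow> u ! i \<noteq> u ! Suc i)"

definition word_representable :: "'a set \<Rightarrow> ('a \<Rightarrow> 'a \<Rightarrow> bool) \<Rightarrow> bool" where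
  "word_representable V E \<longleftrightarrow> (\<exists>w. set w = V \<and>
     (\<forall>x\<in>V. \<forall>y\<in>V. x \<noteq> y \<longrightarrow> (alternate w x y \<longleftrightarrow> E x y)))"

end

theory Submission
  imports Defs
begin

text \<open>A clique vertex already has \<open>card K - 1\<close> neighbours in \<open>K\<close>, so the degree
  bound leaves it at most one neighbour in \<open>I\<close>: the neighbourhoods \<open>N(a)\<close> of the
  vertices \<open>a \<in> I\<close> are pairwise disjoint. Let
  \<open>u = (a\<^sub>1 N(a\<^sub>1) a\<^sub>1) \<dots> (a\<^sub>r N(a\<^sub>r) a\<^sub>r) R\<close>, where \<open>R\<close> lists the clique vertices without
  a neighbour in \<open>I\<close>, and let \<open>\<pi>\<close> be \<open>u\<close> restricted to \<open>K\<close>. In the word \<open>u \<pi>\<close> every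
  clique vertex occurs once in \<open>u\<close> and once in \<open>\<pi>\<close>, in the same order, so any two of
  them alternate. An independent vertex \<open>a\<close> occurs only in its own block; a letter
  \<open>z \<noteq> a\<close> lies between its two copies iff \<open>z \<in> N(a)\<close>, and then the letters \<open>a, z\<close>
  read \<open>a z a z\<close>.\<close>

lemma alternate_commute: "alternate w x y = alternate w y x"
proof -
  have "(\<lambda>z. z = x \<or> z = y) = (\<lambda>z. z = y \<or> z = x)" by auto
  then show ?thesis unfolding alternate_def by simp
qed

lemma not_alternate_if_repeated:
  assumes "x \<notin> set w2" "y \<notin> set w2"
  shows "\<not> alternate (w1 @ x # w2 @ x # w3) x y"
proof
  let ?P = "\<lambda>z. z = x \<or> z = y"
  let ?u = "filter ?P (w1 @ x # w2 @ x # w3)"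
  let ?i = "length (filter ?P w1)"
  have "filter ?P w2 = []"
    using assms by (auto simp: filter_empty_conv)
  then have u: "?u = filter ?P w1 @ x # x # filter ?P w3" by simp
  assume "alternate (w1 @ x # w2 @ x # w3) x y"
  moreover have "Suc ?i < length ?u" using u by simp
  ultimately have "?u ! ?i \<noteq> ?u ! Suc ?i"
    unfolding alternate_def Let_def by blast
  then show False using u by (simp add: nth_append)
qed

lemma alternate_if_filter_eq:
  assumes "p \<noteq> q" "filter (\<lambda>z. z = x \<or> z = y) w = [p, q, p, q]"
  shows "alternate w x y"
  unfolding alternate_def Let_def assms(2)
proof (intro allI impI)
  fix i assume "Suc i < length [p, q, p, q]"
  then have "i = 0 \<or> i = 1 \<or> i = 2" by auto
  then show "[p, q, p, q] ! i \<noteq> [p, q, p, q] ! Suc i" using assms(1) by auto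
qed

lemma filter_eq_singleton_if_distinct:
  assumes "distinct xs" "{t \<in> set xs. P t} = {x}"
  shows "filter P xs = [x]"
proof -
  have d: "distinct (filter P xs)" and s: "set (filter P xs) = {x}" using assms by auto
  then have "length (filter P xs) = 1" using distinct_card[OF d] by simp
  then obtain y where "filter P xs = [y]" by (auto simp: length_Suc_conv)
  with s show ?thesis by simp
qed

lemma filter_eq_pair_if_distinct:
  assumes "distinct xs" "{t \<in> set xs. P t} = {x, y}" "x \<noteq> y"
  obtains p q where "p \<noteq> q" "filter P xs = [p, q]"
proof -
  have d: "distinct (filter P xs)" and "set (filter P xs) = {x, y}" using assms by auto
  then have "length (filter P xs) = 2" using distinct_card[OF d] assms(3) by simp
  then obtain p q where "filter P xs = [p, q]"
    by (auto simp: length_Suc_conv numeral_2_eq_2)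
  with d that show ?thesis by simp
qed

lemma alternate_append_filter:
  assumes "distinct (filter Q u)" "x \<in> set u" "y \<in> set u" "Q x" "Q y" "x \<noteq> y"
  shows "alternate (u @ filter Q u) x y"
proof -
  let ?P = "\<lambda>z. z = x \<or> z = y"
  have same: "filter ?P (filter Q u) = filter ?P u"
    unfolding filter_filter by (rule filter_cong) (use assms(4,5) in auto)
  have "{t \<in> set (filter Q u). ?P t} = {x, y}" using assms(2-5) by auto
  then obtain p q where "p \<noteq> q" and pq: "filter ?P (filter Q u) = [p, q]"
    by (rule filter_eq_pair_if_distinct[OF assms(1) _ assms(6)])
  have "filter ?P (u @ filter Q u) = [p, q, p, q]" using pq same by simp
  with \<open>p \<noteq> q\<close> show ?thesis by (rule alternate_if_filter_eq)
qed

lemma independent_neighbour_unique: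
  assumes "simple_graph V E" "K \<subseteq> V" "I \<subseteq> V" "K \<inter> I = {}" "is_clique V E K"
    and "k \<in> K" "degree V E k \<le> card K"
    and "a \<in> I" "b \<in> I" "E a k" "E b k"
  shows "a = b"
proof (rule ccontr)
  assume "a \<noteq> b"
  have fin: "finite V" and sym: "\<And>x y. E x y \<Longrightarrow> E y x"
    using assms(1) unfolding simple_graph_def by auto
  then have "finite K" using assms(2) finite_subset by blast
  have "a \<notin> K" "b \<notin> K" using assms(4,8,9) by auto
  have "(K - {k}) \<union> {a, b} \<subseteq> {u \<in> V. E k u}"
    using assms(2,3,5,6,8-11) sym unfolding is_clique_def by auto
  then have "card ((K - {k}) \<union> {a, b}) \<le> degree V E k"
    unfolding degree_def by (intro card_mono) (use fin in auto)
  moreover have "card K > 0" using \<open>finite K\<close> assms(6) card_gt_0_iff by blast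
  then have "card ((K - {k}) \<union> {a, b}) = card K + 1"
    using \<open>finite K\<close> \<open>a \<notin> K\<close> \<open>b \<notin> K\<close> \<open>a \<noteq> b\<close> assms(6)
    by (subst card_Un_disjoint) auto
  ultimately show False using assms(7) by simp
qed

locale split_graph_enumeration =
  fixes V K I :: "'a set" and E :: "'a \<Rightarrow> 'a \<Rightarrow> bool" and ks js :: "'a list"
  assumes graph: "simple_graph V E"
    and partition: "K \<union> I = V" "K \<inter> I = {}"
    and clique: "is_clique V E K"
    and independent: "is_independent V E I"
    and neighbour_unique: "\<And>k a b. \<lbrakk>k \<in> K; a \<in> I; b \<in> I; E a k; E b k\<rbrakk> \<Longrightarrow> a = b"
    and ks: "distinct ks" "set ks = K"
    and js: "distinct js" "set js = I"
begin

definition nbrs :: "'a \<Rightarrow> 'a list" where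
  "nbrs a = filter (E a) ks"

definition block :: "'a \<Rightarrow> 'a list" where
  "block a = a # nbrs a @ [a]"

definition unmatched :: "'a list" where
  "unmatched = filter (\<lambda>k. \<forall>a\<in>I. \<not> E a k) ks"

definition prefix_word :: "'a list" where
  "prefix_word = concat (map block js) @ unmatched"

definition clique_order :: "'a list" where
  "clique_order = filter (\<lambda>z. z \<in> K) prefix_word"

definition word :: "'a list" where
  "word = prefix_word @ clique_order"

lemma set_nbrs: "set (nbrs a) = {k \<in> K. E a k}"
  using ks by (auto simp: nbrs_def)

lemma distinct_nbrs: "distinct (nbrs a)"
  using ks by (simp add: nbrs_def)

lemma set_unmatched: "set unmatched = {k \<in> K. \<forall>a\<in>I. \<not> E a k}"
  using ks by (auto simp: unmatched_def)

lemma independent_not_clique: "a \<in> I \<Longrightarrow> a \<notin> K"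
  using partition by auto

lemma adjacent_if_in_block: "\<lbrakk>k \<in> K; b \<in> I; k \<in> set (block b)\<rbrakk> \<Longrightarrow> E b k"
  using independent_not_clique set_nbrs by (auto simp: block_def)

lemma not_in_other_block:
  assumes "a \<in> I" "z \<in> K" "E a z" "b \<in> I" "b \<noteq> a"
  shows "a \<notin> set (block b)" "z \<notin> set (block b)"
proof -
  show "a \<notin> set (block b)"
    using assms(1,5) independent_not_clique set_nbrs by (auto simp: block_def)
  show "z \<notin> set (block b)"
    using adjacent_if_in_block[OF assms(2,4)] neighbour_unique[OF assms(2,1,4,3)] assms(5)
    by blast
qed

lemma set_concat_nbrs: "set (concat (map nbrs xs)) = {k \<in> K. \<exists>a\<in>set xs. E a k}"
  using set_nbrs by auto

lemma distinct_concat_nbrs: "\<lbrakk>distinct xs; set xs \<subseteq> I\<rbrakk> \<Longrightarrow> distinct (concat (map nbrs xs))"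
proof (induction xs)
  case (Cons a xs)
  have "set (nbrs a) \<inter> set (concat (map nbrs xs)) = {}"
  proof (rule ccontr)
    assume "set (nbrs a) \<inter> set (concat (map nbrs xs)) \<noteq> {}"
    then obtain k b where "k \<in> K" "E a k" "b \<in> set xs" "E b k"
      using set_nbrs set_concat_nbrs by auto
    then show False using Cons.prems neighbour_unique[of k a b] by auto
  qed
  then show ?case using Cons distinct_nbrs by auto
qed simp

lemma clique_order_eq: "clique_order = concat (map nbrs js) @ unmatched"
proof -
  have "filter (\<lambda>z. z \<in> K) (block a) = nbrs a" if "a \<in> I" for a
    using independent_not_clique[OF that] set_nbrs by (auto simp: block_def filter_id_conv)
  then have "map (filter (\<lambda>z. z \<in> K) \<circ> block) js = map nbrs js"
    using js(2) by auto
  moreover have "filter (\<lambda>z. z \<in> K) unmatched = unmatched"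
    using set_unmatched by (auto simp: filter_id_conv)
  ultimately show ?thesis
    by (simp add: clique_order_def prefix_word_def filter_concat del: map_eq_conv)
qed

lemma distinct_clique_order: "distinct clique_order"
  unfolding clique_order_eq
  using distinct_concat_nbrs[OF js(1)] set_concat_nbrs js(2) set_unmatched ks(1)
  by (auto simp: unmatched_def)

lemma set_prefix_word: "set prefix_word = V"
  using set_concat_nbrs js(2) set_unmatched partition(1)
  by (auto simp: prefix_word_def block_def)

lemma set_clique_order: "set clique_order = K"
  using set_prefix_word partition(1) by (auto simp: clique_order_def)

lemma set_word: "set word = V"
  using set_prefix_word set_clique_order partition(1) by (auto simp: word_def)

lemma alternate_clique:
  assumes "x \<in> K" "y \<in> K" "x \<noteq> y"
  shows "alternate word x y"
  unfolding word_def clique_order_def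
  using assms partition(1) set_prefix_word distinct_clique_order[unfolded clique_order_def]
  by (intro alternate_append_filter) auto

lemma alternate_independent:
  assumes a: "a \<in> I" and "z \<in> V" "a \<noteq> z"
  shows "alternate word a z \<longleftrightarrow> E a z"
proof -
  from a js(2) obtain j1 j2 where js_split: "js = j1 @ a # j2"
    by (blast dest: split_list)
  have j12: "set j1 \<subseteq> I" "set j2 \<subseteq> I" "a \<notin> set j1" "a \<notin> set j2"
    using js js_split by auto
  define tail where "tail = concat (map block j2) @ unmatched @ clique_order"
  have "prefix_word = concat (map block j1) @ a # nbrs a @ a # concat (map block j2) @ unmatched"
    unfolding prefix_word_def by (simp add: js_split block_def)
  then have word_split: "word = concat (map block j1) @ a # nbrs a @ a # tail"
    by (simp add: word_def tail_def)
  have "a \<notin> set (nbrs a)" using set_nbrs independent_not_clique[OF a] by auto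
  show ?thesis
  proof
    assume alt: "alternate word a z"
    show "E a z"
    proof (rule ccontr)
      assume "\<not> E a z"
      then have "z \<notin> set (nbrs a)" using set_nbrs by auto
      with \<open>a \<notin> set (nbrs a)\<close> alt show False
        using not_alternate_if_repeated[of a "nbrs a" z "concat (map block j1)" tail]
        by (simp add: word_split)
    qed
  next
    assume "E a z"
    then have z: "z \<in> K"
      using independent a \<open>z \<in> V\<close> partition(1) unfolding is_independent_def by auto
    let ?P = "\<lambda>t. t = a \<or> t = z"
    have not_in_blocks: "filter ?P (concat (map block j)) = []"
      if "set j \<subseteq> I" "a \<notin> set j" for j
      using that not_in_other_block[OF a z \<open>E a z\<close>] by (fastforce simp: filter_empty_conv)
    have "filter ?P unmatched = []"
      using set_unmatched \<open>E a z\<close> a independent_not_clique by (auto simp: filter_empty_conv)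
    moreover have "filter ?P (nbrs a) = [z]"
      using distinct_nbrs set_nbrs z \<open>E a z\<close> independent_not_clique[OF a]
      by (intro filter_eq_singleton_if_distinct) auto
    moreover have "filter ?P clique_order = [z]"
      using distinct_clique_order set_clique_order z independent_not_clique[OF a]
      by (intro filter_eq_singleton_if_distinct) auto
    ultimately have "filter ?P word = [a, z, a, z]"
      unfolding word_split tail_def using not_in_blocks j12 by simp
    with \<open>a \<noteq> z\<close> show "alternate word a z" by (rule alternate_if_filter_eq)
  qed
qed

lemma word_representable: "word_representable V E"
  unfolding word_representable_def
proof (intro exI conjI ballI impI)
  show "set word = V" by (rule set_word)
  have sym: "\<And>x y. E x y \<Longrightarrow> E y x" using graph unfolding simple_graph_def by blast
  fix x y assume "x \<in> V" "y \<in> V" "x \<noteq> y"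
  then consider "x \<in> I" | "y \<in> I" | "x \<in> K" "y \<in> K" using partition(1) by blast
  then show "alternate word x y \<longleftrightarrow> E x y"
  proof cases
    case 1 then show ?thesis using alternate_independent \<open>y \<in> V\<close> \<open>x \<noteq> y\<close> by blast
  next
    case 2
    then have "alternate word y x \<longleftrightarrow> E y x"
      using alternate_independent \<open>x \<in> V\<close> \<open>x \<noteq> y\<close> by blast
    then show ?thesis using alternate_commute[of word x y] sym[of x y] sym[of y x] by blast
  next
    case 3 then show ?thesis
      using alternate_clique clique \<open>x \<noteq> y\<close> unfolding is_clique_def by blast
  qed
qed

end

lemma word_representable_if_disjoint_neighbourhoods:
  assumes "simple_graph V E" "K \<union> I = V" "K \<inter> I = {}"
    and "is_clique V E K" "is_independent V E I"
    and "\<And>k a b. \<lbrakk>k \<in> K; a \<in> I; b \<in> I; E a k; E b k\<rbrakk> \<Longrightarrow> a = b"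
  shows "word_representable V E"
proof -
  have "finite K" "finite I" using assms(1,2) unfolding simple_graph_def by auto
  then obtain ks js where "distinct ks" "set ks = K" "distinct js" "set js = I"
    by (meson finite_distinct_list)
  with assms interpret split_graph_enumeration V K I E ks js
    by unfold_locales
  show ?thesis by (rule word_representable)
qed

theorem theorem10:
  fixes V K I :: "'a set" and E :: "'a \<Rightarrow> 'a \<Rightarrow> bool"
  assumes "simple_graph V E"
    and "K \<union> I = V" and "K \<inter> I = {}"
    and "is_maximal_clique V E K"
    and "is_independent V E I"
    and "\<forall>v\<in>K. degree V E v \<le> card K"
  shows "word_representable V E"
proof -
  have clique: "is_clique V E K" using assms(4) unfolding is_maximal_clique_def by blast
  show ?thesis
  proof (rule word_representable_if_disjoint_neighbourhoods[OF assms(1-3) clique assms(5)])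
    fix k a b assume "k \<in> K" "a \<in> I" "b \<in> I" "E a k" "E b k"
    then show "a = b"
      using independent_neighbour_unique[OF assms(1) _ _ assms(3) clique] assms(2,6) by blast
  qed
qed

end
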